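(* Under i.i.d. Rayleigh fading on all $2M$ links with average SNR $\bar\gamma$, as $\bar\gamma\to0$, $$\bar R_{SD}\sim\frac{\bar\gamma}{2\ln2}\sum_{k=1}^{2M}\frac1k,\qquad \bar R_{\rm conv}\sim\frac{\bar\gamma}{4\ln2}\sum_{k=1}^{M}\frac1k,$$ so that $\lim_{\bar\gamma\to0}\bar R_{SD}/\bar R_{\rm conv}=2\sum_{k=1}^{2M}\frac1k\big/\sum_{k=1}^M\frac1k$, which equals $3$ for $M=1$, tends to $2$ as $M\to\infty$, and lies in $[2,3]$ for all $M\ge1$.
   Context: Network of a source, $M$ relays, and a destination; SNRs $\gamma_{Sk},\gamma_{kD}$ of the $2M$ links are i.i.d. exponential with mean $\bar\gamma$ (Rayleigh fading). $\bar R_{SD}=M\int_0^\infty\log_2(1+x)f_\gamma(x)(F_\gamma(x))^{2M-1}dx$ with $f_\gamma(x)=e^{-x/\bar\gamma}/\bar\gamma$, $F_\gamma(x)=1-e^{-x/\bar\gamma}$ (the maximum average rate of the buffer-aided protocol). $\bar R_{\rm conv}=\frac12E\{\max_k\min\{\log_2(1+\gamma_{Sk}),\log_2(1+\gamma_{kD})\}\}$ is the average rate of conventional (non-buffer-aided) relay selection; in this i.i.d. Rayleigh case $\bar R_{\rm conv}=\frac M2\sum_{k=0}^{M-1}\binom{M-1}{k}\frac{(-1)^k}{(1+k)\ln2}e^{2(1+k)/\bar\gamma}E_1(2(1+k)/\bar\gamma)$, where $E_1(x)=\int_1^\infty e^{-xt}/t\,dt$. $f\sim g$ means $f/g\to1$.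 *)

theory Defs
  imports "HOL-Probability.Probability"
begin

text \<open>Rayleigh fading: SNR exponential with mean g (the average SNR \<gamma>-bar).\<close>
definition f_gamma :: "real \<Rightarrow> real \<Rightarrow> real" where
  "f_gamma g x = exp (- x / g) / g"

definition F_gamma :: "real \<Rightarrow> real \<Rightarrow> real" where
  "F_gamma g x = 1 - exp (- x / g)"

definition R_SD :: "nat \<Rightarrow> real \<Rightarrow> real" where
  "R_SD M g = real M * (LBINT x:{0..}. log 2 (1 + x) * f_gamma g x * (F_gamma g x) ^ (2 * M - 1))"

text \<open>Joint law of the 2M i.i.d. link SNRs: coordinate k < M is gamma_{Sk},
  coordinate M + k is gamma_{kD}; each is exponential with mean g (rate 1/g).\<close>
definition link_snrs :: "nat \<Rightarrow> real \<Rightarrow> (nat \<Rightarrow> real) measure" where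
  "link_snrs M g = PiM {..<2 * M} (\<lambda>_. density lborel (exponential_density (1 / g)))"

definition R_conv :: "nat \<Rightarrow> real \<Rightarrow> real" where
  "R_conv M g = 1 / 2 * (\<integral>\<gamma>. Max ((\<lambda>k. min (log 2 (1 + \<gamma> k)) (log 2 (1 + \<gamma> (M + k)))) ` {..<M})
                           \<partial>(link_snrs M g))"

end

theory Submission
  imports Defs "HOL-Analysis.Harmonic_Numbers" "HOL-Real_Asymp.Real_Asymp"
begin

(* Both rates are expectations of log2 (1 + X), where X is the maximum of n i.i.d. exponential
   variables of some mean m: for R_SD, M f F^(2M-1) is half the density of the maximum of the
   2M link SNRs (m = mean SNR); for R_conv, the weaker hop of a relay is exponential with half
   the mean SNR, and the selected relay maximises M independent such minima.  The maximum of n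
   standard exponentials has mean H_n, and log2 (1 + m t) / m is dominated by t / ln 2 and tends
   to it as m -> 0, so dominated convergence gives E log2 (1 + X) ~ m H_n / ln 2.  The facts about
   the ratio 2 H_2M / H_M follow from H_M <= H_2M <= H_M + 1, 2 H_2M <= 3 H_M and H_M -> oo. *)

section \<open>Harmonic numbers\<close>

lemma sum_inverse_eq_harm: "(\<Sum>k=1..n. 1 / real k) = harm n"
  by (simp add: harm_def divide_inverse)

lemma harm_double_le: "2 * harm (2 * n) \<le> (3 * harm n :: real)"
proof (induction n)
  case 0
  then show ?case by (simp add: harm_def)
next
  case (Suc n)
  have "2 * Suc n = Suc (Suc (2 * n))"
    by simp
  then have "2 * harm (2 * Suc n) = (2::real) * harm (2 * n) + 2 / (2 * real n + 1) + 2 / (2 * real n + 2)"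
    by (simp add: harm_Suc field_simps)
  also have "\<dots> \<le> 3 * harm n + 3 / (real n + 1)"
  proof -
    have "2 / (2 * real n + 1) \<le> 2 / (real n + 1)" "2 / (2 * real n + 2) = 1 / (real n + 1)"
      by (auto intro: divide_left_mono simp: field_simps)
    then show ?thesis
      using Suc by (simp add: add_divide_distrib[symmetric])
  qed
  also have "\<dots> = 3 * harm (Suc n)"
    by (simp add: harm_Suc field_simps)
  finally show ?case .
qed

lemma harm_double_diff_le: "harm (2 * n) - harm n \<le> (1 :: real)"
proof -
  \<comment> \<open>The extra term \<open>1 / (2n + 1)\<close> is what makes the induction go through.\<close>
  have "harm (2 * n) - harm n + 1 / (2 * real n + 1) \<le> (1 :: real)"
  proof (induction n)
    case 0
    then show ?case by (simp add: harm_def)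
  next
    case (Suc n)
    have "harm (Suc (Suc (2 * n))) = harm (2 * n) + 1 / (2 * real n + 1) + 1 / (2 * real n + 2 :: real)"
      "harm (Suc n) = harm n + 1 / (2 * real n + 2) + 1 / (2 * real n + 2 :: real)"
      by (simp_all add: harm_Suc field_simps)
    then have "harm (2 * Suc n) - harm (Suc n) + 1 / (2 * real (Suc n) + 1)
        = harm (2 * n) - harm n + 1 / (2 * real n + 1) - 1 / (2 * real n + 2) + 1 / (2 * real n + 3 :: real)"
      by (simp add: numeral_eq_Suc)
    also have "\<dots> \<le> 1"
      using Suc frac_le[of 1 1 "2 * real n + 2" "2 * real n + 3"] by simp
    finally show ?case .
  qed
  moreover have "0 \<le> 1 / (2 * real n + 1)"
    by simp
  ultimately show ?thesis
    by linarith
qed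

lemma harm_double_ratio_tendsto: "(\<lambda>n. 2 * harm (2 * n) / harm n) \<longlonglongrightarrow> (2 :: real)"
proof (rule tendsto_sandwich[where f = "\<lambda>_. 2" and h = "\<lambda>n. 2 + 2 * inverse (harm n)"])
  have "(\<lambda>n. 2 + 2 * inverse (harm n :: real)) \<longlonglongrightarrow> 2 + 2 * 0"
    by (intro tendsto_intros tendsto_inverse_0_at_top harm_at_top)
  then show "(\<lambda>n. 2 + 2 * inverse (harm n :: real)) \<longlonglongrightarrow> 2"
    by simp
  have bounds: "2 \<le> 2 * harm (2 * n) / (harm n :: real) \<and> 2 * harm (2 * n) / harm n \<le> 2 + 2 * inverse (harm n :: real)"
    if "0 < n" for n
  proof -
    have "harm n \<le> (harm (2 * n) :: real)" "harm (2 * n) \<le> harm n + (1 :: real)"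
      using harm_mono[of n "2 * n"] harm_double_diff_le[of n] by auto
    moreover have "0 < (harm n :: real)"
      using that by simp
    ultimately show ?thesis
      by (simp add: field_simps del: harm_pos_iff)
  qed
  show "\<forall>\<^sub>F n in sequentially. 2 \<le> 2 * harm (2 * n) / (harm n :: real)"
    using eventually_gt_at_top[of 0] by eventually_elim (use bounds in blast)
  show "\<forall>\<^sub>F n in sequentially. 2 * harm (2 * n) / harm n \<le> 2 + 2 * inverse (harm n :: real)"
    using eventually_gt_at_top[of 0] by eventually_elim (use bounds in blast)
qed simp

section \<open>The maximum of i.i.d. exponential variables\<close>

definition max_exp_density :: "nat \<Rightarrow> real \<Rightarrow> real \<Rightarrow> real" where
  "max_exp_density n m x =
     (if x < 0 then 0 else real n * (exp (- x / m) / m) * (1 - exp (- x / m)) ^ (n - 1))"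

lemma max_exp_density_nonneg: "0 < m \<Longrightarrow> 0 \<le> max_exp_density n m x"
  by (auto simp: max_exp_density_def)

lemma borel_measurable_max_exp_density [measurable]: "max_exp_density n m \<in> borel_measurable borel"
  unfolding max_exp_density_def by measurable

lemma max_exp_density_scale: "0 < m \<Longrightarrow> max_exp_density n m (m * x) = max_exp_density n 1 x / m"
  by (auto simp: max_exp_density_def mult_less_0_iff)

lemma nn_integral_max_exp_density_atMost:
  assumes "0 < m" "1 \<le> n"
  shows "(\<integral>\<^sup>+x. ennreal (max_exp_density n m x * indicator {..a} x) \<partial>lborel)
           = ennreal (if 0 \<le> a then (1 - exp (- a / m)) ^ n else 0)"
proof (cases "0 \<le> a")
  case False
  then have "(\<lambda>x. ennreal (max_exp_density n m x * indicator {..a} x)) = (\<lambda>x. 0)"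
    by (auto simp: fun_eq_iff max_exp_density_def split: split_indicator)
  then show ?thesis
    using False by simp
next
  case True
  define F where "F x = (1 - exp (- x / m)) ^ n" for x
  define f where "f x = real n * (exp (- x / m) / m) * (1 - exp (- x / m)) ^ (n - 1)" for x
  have "DERIV F x :> f x" for x
    unfolding F_def f_def using \<open>0 < m\<close>
    by (auto intro!: derivative_eq_intros simp: field_simps)
  then have "(f has_integral (F a - F 0)) {0..a}"
    by (intro fundamental_theorem_of_calculus[OF True])
       (auto simp: has_real_derivative_iff_has_vector_derivative[symmetric] intro: DERIV_subset)
  then have "(\<integral>\<^sup>+x. ennreal (indicator {0..a} x * f x) \<partial>lborel) = ennreal (F a - F 0)"
    by (rule nn_integral_has_integral_lebesgue[rotated])
       (use \<open>0 < m\<close> in \<open>auto simp: f_def\<close>)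
  also have "(\<lambda>x. ennreal (indicator {0..a} x * f x)) = (\<lambda>x. ennreal (max_exp_density n m x * indicator {..a} x))"
    by (auto simp: fun_eq_iff max_exp_density_def f_def split: split_indicator)
  finally show ?thesis
    using True \<open>1 \<le> n\<close> by (simp add: F_def power_0_left)
qed

text \<open>A primitive of \<open>x * max_exp_density n 1 x\<close> vanishing at 0. Its sum truncates the series
  \<open>t = - ln (1 - u) = (\<Sum>k\<ge>1. u ^ k / k)\<close> at \<open>u = 1 - exp (- t)\<close>, whence the limit \<open>harm n\<close>.\<close>

definition max_exp_partial_mean :: "nat \<Rightarrow> real \<Rightarrow> real" where
  "max_exp_partial_mean n t =
     (\<Sum>j<n. (1 - exp (- t)) ^ Suc j / real (Suc j)) - t * (1 - (1 - exp (- t)) ^ n)"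

lemma max_exp_partial_mean_deriv:
  assumes "1 \<le> n"
  shows "DERIV (max_exp_partial_mean n) t :> t * (real n * exp (- t) * (1 - exp (- t)) ^ (n - 1))"
proof -
  have "DERIV (\<lambda>t. (1 - exp (- t)) ^ Suc j / real (Suc j)) t :> (1 - exp (- t)) ^ j * exp (- t)" for j
  proof -
    have "DERIV (\<lambda>t. (1 - exp (- t)) ^ Suc j) t :> real (Suc j) * (1 - exp (- t)) ^ j * exp (- t)"
      by (rule derivative_eq_intros refl | simp)+
    from DERIV_cdivide[OF this, of "real (Suc j)"] show ?thesis
      by simp
  qed
  then have "DERIV (\<lambda>t. \<Sum>j<n. (1 - exp (- t)) ^ Suc j / real (Suc j)) t
               :> (\<Sum>j<n. (1 - exp (- t)) ^ j * exp (- t))"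
    by (intro DERIV_sum)
  also have "(\<Sum>j<n. (1 - exp (- t)) ^ j * exp (- t)) = 1 - (1 - exp (- t)) ^ n"
    using one_diff_power_eq[of "1 - exp (- t)" n] by (simp add: sum_distrib_left mult.commute)
  finally have sum: "DERIV (\<lambda>t. \<Sum>j<n. (1 - exp (- t)) ^ Suc j / real (Suc j)) t
                      :> 1 - (1 - exp (- t)) ^ n" .
  have "DERIV (\<lambda>t. (1 - exp (- t)) ^ n) t :> real n * (1 - exp (- t)) ^ (n - 1) * exp (- t)"
    by (auto intro!: derivative_eq_intros)
  then have "DERIV (\<lambda>t. t * (1 - (1 - exp (- t)) ^ n)) t
               :> (1 - (1 - exp (- t)) ^ n) - t * (real n * (1 - exp (- t)) ^ (n - 1) * exp (- t))"
    by (auto intro!: derivative_eq_intros simp: algebra_simps)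
  from DERIV_diff[OF sum this] show ?thesis
    unfolding max_exp_partial_mean_def[abs_def] by (simp add: algebra_simps)
qed

lemma max_exp_partial_mean_tendsto: "(max_exp_partial_mean n \<longlongrightarrow> harm n) at_top"
proof -
  have "((\<lambda>t. exp (- t)) \<longlongrightarrow> (0 :: real)) at_top"
    by real_asymp
  then have "((\<lambda>t. \<Sum>j<n. (1 - exp (- t)) ^ Suc j / real (Suc j)) \<longlongrightarrow>
               (\<Sum>j<n. (1 - 0) ^ Suc j / real (Suc j))) at_top"
    by (intro tendsto_intros) auto
  then have sum: "((\<lambda>t. \<Sum>j<n. (1 - exp (- t)) ^ Suc j / real (Suc j)) \<longlongrightarrow> harm n) at_top"
    by (simp add: harm_altdef divide_inverse)
  have "((\<lambda>t. t * (1 - (1 - exp (- t)) ^ n)) \<longlongrightarrow> (0 :: real)) at_top"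
  proof (rule tendsto_sandwich[where f = "\<lambda>_. 0 :: real" and h = "\<lambda>t. real n * (t * exp (- t))"])
    show "((\<lambda>t. real n * (t * exp (- t))) \<longlongrightarrow> 0) at_top"
      by real_asymp
    have bounds: "0 \<le> 1 - (1 - exp (- t)) ^ n \<and> 1 - (1 - exp (- t)) ^ n \<le> real n * exp (- t)"
      if "0 \<le> t" for t :: real
      using that Bernoulli_inequality[of "- exp (- t)" n] by (auto simp: power_le_one)
    show "\<forall>\<^sub>F t :: real in at_top. 0 \<le> t * (1 - (1 - exp (- t)) ^ n)"
      by (rule eventually_at_top_linorderI[of 0]) (use bounds in simp)
    show "\<forall>\<^sub>F t :: real in at_top. t * (1 - (1 - exp (- t)) ^ n) \<le> real n * (t * exp (- t))"
      by (rule eventually_at_top_linorderI[of 0])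
         (use bounds in \<open>auto intro: mult_left_mono simp: mult.left_commute\<close>)
  qed simp
  from tendsto_diff[OF sum this] show ?thesis
    by (simp add: max_exp_partial_mean_def[abs_def])
qed

lemma has_bochner_integral_max_exp_density_mean:
  assumes "1 \<le> n"
  shows "has_bochner_integral lborel (\<lambda>t. max_exp_density n 1 t * t) (harm n)"
proof -
  have "(\<integral>\<^sup>+t. ennreal (t * (real n * exp (- t) * (1 - exp (- t)) ^ (n - 1))) * indicator {0..} t \<partial>lborel)
         = harm n - max_exp_partial_mean n 0"
    by (rule nn_integral_FTC_atLeast[OF _ max_exp_partial_mean_deriv[OF assms] _
          max_exp_partial_mean_tendsto]) auto
  also have "(\<lambda>t. ennreal (t * (real n * exp (- t) * (1 - exp (- t)) ^ (n - 1))) * indicator {0..} t)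
             = (\<lambda>t. ennreal (max_exp_density n 1 t * t))"
    by (auto simp: max_exp_density_def fun_eq_iff split: split_indicator)
  finally have "(\<integral>\<^sup>+t. ennreal (max_exp_density n 1 t * t) \<partial>lborel) = ennreal (harm n)"
    by (simp add: max_exp_partial_mean_def)
  moreover have "AE t in lborel. 0 \<le> max_exp_density n 1 t * t"
    by (auto simp: max_exp_density_def)
  ultimately show ?thesis
    by (intro has_bochner_integral_nn_integral) (auto simp: harm_nonneg)
qed

lemma integral_max_exp_density_scale:
  assumes "0 < m"
  shows "(\<integral>x. max_exp_density n m x * h x \<partial>lborel) = (\<integral>t. max_exp_density n 1 t * h (m * t) \<partial>lborel)"
proof -
  have "(\<integral>x. max_exp_density n m x * h x \<partial>lborel)
          = \<bar>m\<bar> *\<^sub>R (\<integral>t. max_exp_density n m (0 + m * t) * h (0 + m * t) \<partial>lborel)"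
    by (rule lborel_integral_real_affine) (use assms in simp)
  then show ?thesis
    using assms by (simp add: max_exp_density_scale)
qed

lemma max_exp_log_rate_tendsto:
  assumes "1 \<le> n"
  shows "((\<lambda>m. (\<integral>x. max_exp_density n m x * log 2 (1 + x) \<partial>lborel) / m) \<longlongrightarrow> harm n / ln 2) (at_right 0)"
proof -
  define w where "w t = max_exp_density n 1 t * t / ln 2" for t
  have log_bound: "0 \<le> T * log 2 (1 + t / T) \<and> T * log 2 (1 + t / T) \<le> t / ln 2"
    if "0 < T" "0 \<le> t" for T t :: real
    using that ln_add_one_self_le_self[of "t / T"] by (simp add: log_def field_simps)
  have "((\<lambda>T. \<integral>t. max_exp_density n 1 t * (T * log 2 (1 + t / T)) \<partial>lborel) \<longlongrightarrow> integral\<^sup>L lborel w) at_top"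
  proof (rule integral_dominated_convergence_at_top)
    show "integrable lborel w"
      using has_bochner_integral_max_exp_density_mean[OF assms] unfolding w_def
      by (simp add: has_bochner_integral_iff)
    show "AE t in lborel. ((\<lambda>T. max_exp_density n 1 t * (T * log 2 (1 + t / T))) \<longlongrightarrow> w t) at_top"
    proof (rule AE_I2)
      fix t :: real
      have "((\<lambda>T. T * ln (1 + t / T)) \<longlongrightarrow> t) at_top"
        by real_asymp
      then have "((\<lambda>T. max_exp_density n 1 t * (T * ln (1 + t / T) / ln 2)) \<longlongrightarrow> w t) at_top"
        unfolding w_def by (auto intro!: tendsto_intros)
      then show "((\<lambda>T. max_exp_density n 1 t * (T * log 2 (1 + t / T))) \<longlongrightarrow> w t) at_top"
        by (simp add: log_def)
    qed
    have bound: "norm (max_exp_density n 1 t * (T * log 2 (1 + t / T))) \<le> w t" if "0 < T" for T t :: real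
    proof (cases "t < 0")
      case False
      then have "\<bar>T * log 2 (1 + t / T)\<bar> \<le> t / ln 2"
        using log_bound[OF that] by simp
      then have "max_exp_density n 1 t * \<bar>T * log 2 (1 + t / T)\<bar> \<le> max_exp_density n 1 t * (t / ln 2)"
        by (intro mult_left_mono max_exp_density_nonneg) auto
      then show ?thesis
        by (simp add: w_def abs_mult max_exp_density_nonneg)
    qed (simp add: w_def max_exp_density_def)
    show "\<forall>\<^sub>F T in at_top. AE t in lborel. norm (max_exp_density n 1 t * (T * log 2 (1 + t / T))) \<le> w t"
      by (rule eventually_mono[OF eventually_gt_at_top[of 0]]) (use bound in blast)
    show "w \<in> borel_measurable lborel"
      unfolding w_def by measurable
    show "(\<lambda>t. max_exp_density n 1 t * (T * log 2 (1 + t / T))) \<in> borel_measurable lborel" for T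
      by measurable
  qed
  also have "integral\<^sup>L lborel w = harm n / ln 2"
    using has_bochner_integral_max_exp_density_mean[OF assms] unfolding w_def
    by (simp add: has_bochner_integral_iff)
  finally have "((\<lambda>T. \<integral>t. max_exp_density n 1 t * (T * log 2 (1 + t / T)) \<partial>lborel) \<longlongrightarrow> harm n / ln 2) at_top" .
  moreover have "\<forall>\<^sub>F T in at_top. (\<integral>t. max_exp_density n 1 t * (T * log 2 (1 + t / T)) \<partial>lborel)
      = (\<integral>x. max_exp_density n (inverse T) x * log 2 (1 + x) \<partial>lborel) / inverse T"
  proof (rule eventually_mono[OF eventually_gt_at_top[of 0]])
    fix T :: real
    assume "0 < T"
    then have "(\<integral>x. max_exp_density n (inverse T) x * log 2 (1 + x) \<partial>lborel) / inverse T
        = T * (\<integral>t. max_exp_density n 1 t * log 2 (1 + t / T) \<partial>lborel)"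
      using integral_max_exp_density_scale[of "inverse T" n "\<lambda>x. log 2 (1 + x)"]
      by (simp add: divide_inverse mult.commute)
    also have "\<dots> = (\<integral>t. max_exp_density n 1 t * (T * log 2 (1 + t / T)) \<partial>lborel)"
      by (simp add: mult.left_commute)
    finally show "(\<integral>t. max_exp_density n 1 t * (T * log 2 (1 + t / T)) \<partial>lborel)
        = (\<integral>x. max_exp_density n (inverse T) x * log 2 (1 + x) \<partial>lborel) / inverse T" ..
  qed
  ultimately show ?thesis
    unfolding filterlim_at_right_to_top by (rule Lim_transform_eventually)
qed

section \<open>Conventional relay selection\<close>

lemma (in product_prob_space) indep_vars_components:
  assumes "I \<noteq> {}"
  shows "P.indep_vars M (\<lambda>i \<omega>. \<omega> i) I"
proof (subst P.indep_vars_iff_distr_eq_PiM'[OF assms])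
  have "distr (PiM I M) (PiM I M) (\<lambda>\<omega>. \<lambda>i\<in>I. \<omega> i) = distr (PiM I M) (PiM I M) (\<lambda>\<omega>. \<omega>)"
    by (rule distr_cong) (auto simp: space_PiM)
  also have "\<dots> = PiM I (\<lambda>i. distr (PiM I M) (M i) (\<lambda>\<omega>. \<omega> i))"
    by (auto simp: PiM_component intro!: PiM_cong)
  finally show "distr (PiM I M) (PiM I M) (\<lambda>\<omega>. \<lambda>i\<in>I. \<omega> i) = PiM I (\<lambda>i. distr (PiM I M) (M i) (\<lambda>\<omega>. \<omega> i))" .
qed auto

definition best_link_snr :: "nat \<Rightarrow> (nat \<Rightarrow> real) \<Rightarrow> real" where
  "best_link_snr M \<gamma> = Max ((\<lambda>k. min (\<gamma> k) (\<gamma> (M + k))) ` {..<M})"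

lemma Max_min_log_eq_log_best_link_snr:
  assumes "M \<noteq> 0" and nonneg: "\<forall>i\<in>{..<2 * M}. 0 \<le> \<gamma> i"
  shows "Max ((\<lambda>k. min (log 2 (1 + \<gamma> k)) (log 2 (1 + \<gamma> (M + k)))) ` {..<M})
           = log 2 (1 + max (best_link_snr M \<gamma>) 0)"
proof -
  define L where "L x = log 2 (1 + max x 0)" for x :: real
  have "mono L"
    by (auto simp: mono_def L_def)
  then have "L (best_link_snr M \<gamma>) = Max (L ` (\<lambda>k. min (\<gamma> k) (\<gamma> (M + k))) ` {..<M})"
    unfolding best_link_snr_def using assms by (intro mono_Max_commute) auto
  also have "\<dots> = Max ((\<lambda>k. min (log 2 (1 + \<gamma> k)) (log 2 (1 + \<gamma> (M + k)))) ` {..<M})"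
  proof -
    have "L (min (\<gamma> k) (\<gamma> (M + k))) = min (log 2 (1 + \<gamma> k)) (log 2 (1 + \<gamma> (M + k)))" if "k < M" for k
    proof -
      have "0 \<le> \<gamma> k" "0 \<le> \<gamma> (M + k)"
        using nonneg that by auto
      then show ?thesis
        by (auto simp: L_def min_def)
    qed
    then show ?thesis
      unfolding image_image by (intro arg_cong[where f = Max] image_cong) auto
  qed
  finally show ?thesis
    by (simp add: L_def)
qed

context
  fixes M :: nat and g :: real
  assumes M_pos: "1 \<le> M" and g_pos: "0 < g"
begin

abbreviation snr :: "real measure" where
  "snr \<equiv> density lborel (exponential_density (1 / g))"

lemma sets_snr [simp, measurable_cong]: "sets snr = sets borel"
  by simp

interpretation SNR: prob_space snr
  by (rule prob_space_exponential_density) (use g_pos in simp)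

interpretation Links: product_prob_space "\<lambda>_. snr" "{..<2 * M}"
  by unfold_locales

lemma indep_link_minima:
  "Links.indep_vars (\<lambda>_. borel) (\<lambda>k \<omega>. min (\<omega> k) (\<omega> (M + k))) {..<M}"
proof -
  have "Links.indep_vars (\<lambda>_. snr) (\<lambda>i \<omega>. \<omega> i) {..<2 * M}"
    using M_pos by (intro Links.indep_vars_components) (auto simp: lessThan_empty_iff)
  then have "Links.indep_vars (\<lambda>k. PiM {k, M + k} (\<lambda>_. snr))
      (\<lambda>k \<omega>. restrict (\<lambda>i. \<omega> i) {k, M + k}) {..<M}"
    by (rule Links.indep_vars_restrict) (auto simp: disjoint_family_on_def)
  then have "Links.indep_vars (\<lambda>_. borel)
      (\<lambda>k \<omega>. (\<lambda>f. min (f k) (f (M + k))) (restrict (\<lambda>i. \<omega> i) {k, M + k})) {..<M}"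
    by (rule Links.indep_vars_compose2)
       (simp add: measurable_cong_sets[OF sets_PiM_cong[OF refl sets_snr] refl])
  then show ?thesis
    by (rule Links.indep_vars_cong[THEN iffD1, rotated 3]) auto
qed

lemma measure_snr_greaterThan: "measure snr {a<..} = (if 0 \<le> a then exp (- a / g) else 1)"
proof -
  have "emeasure snr {..a} = erlang_CDF 0 (1 / g) a"
    by (rule emeasure_erlang_density) (use g_pos in simp)
  then have "measure snr {..a} = erlang_CDF 0 (1 / g) a"
    using g_pos by (simp add: SNR.emeasure_eq_measure)
  moreover have "measure snr {a<..} = 1 - measure snr {..a}"
    using SNR.prob_compl[of "{..a}"] by (simp add: Compl_eq_Diff_UNIV[symmetric] Compl_atMost)
  ultimately show ?thesis
    by (simp add: erlang_CDF_0)
qed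

lemma prob_link_min_le:
  assumes "k < M"
  shows "Links.prob {\<omega> \<in> space (PiM {..<2 * M} (\<lambda>_. snr)). min (\<omega> k) (\<omega> (M + k)) \<le> a}
           = (if 0 \<le> a then 1 - exp (- a / (g / 2)) else 0)"
proof -
  let ?\<Omega> = "space (PiM {..<2 * M} (\<lambda>_. snr))"
  have "emeasure (PiM {..<2 * M} (\<lambda>_. snr)) {\<omega> \<in> ?\<Omega>. \<forall>i\<in>{k, M + k}. \<omega> i \<in> {a<..}}
          = (\<Prod>i\<in>{k, M + k}. emeasure snr {a<..})"
    by (rule Links.emeasure_PiM_Collect) (use assms in auto)
  also have "\<dots> = ennreal ((measure snr {a<..})\<^sup>2)"
    using assms by (simp add: SNR.emeasure_eq_measure power2_eq_square ennreal_mult)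
  finally have "Links.prob {\<omega> \<in> ?\<Omega>. a < min (\<omega> k) (\<omega> (M + k))} = (measure snr {a<..})\<^sup>2"
    by (simp add: Links.emeasure_eq_measure)
  moreover have "{\<omega> \<in> ?\<Omega>. min (\<omega> k) (\<omega> (M + k)) \<le> a} = ?\<Omega> - {\<omega> \<in> ?\<Omega>. a < min (\<omega> k) (\<omega> (M + k))}"
    by auto
  moreover have "(exp (- a / g))\<^sup>2 = exp (- a / (g / 2))"
    by (simp add: power2_eq_square exp_add[symmetric] field_simps)
  ultimately show ?thesis
    using assms by (simp add: Links.prob_compl measure_snr_greaterThan)
qed

lemma prob_best_link_snr_le:
  "Links.prob {\<omega> \<in> space (PiM {..<2 * M} (\<lambda>_. snr)). best_link_snr M \<omega> \<le> a}
     = (if 0 \<le> a then (1 - exp (- a / (g / 2))) ^ M else 0)"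
proof -
  let ?\<Omega> = "space (PiM {..<2 * M} (\<lambda>_. snr))"
  have links: "{..<M} \<noteq> {}"
    using M_pos by (simp add: lessThan_empty_iff)
  have "Links.prob (\<Inter>k\<in>{..<M}. (\<lambda>\<omega>. min (\<omega> k) (\<omega> (M + k))) -` {..a} \<inter> ?\<Omega>)
      = (\<Prod>k<M. Links.prob ((\<lambda>\<omega>. min (\<omega> k) (\<omega> (M + k))) -` {..a} \<inter> ?\<Omega>))"
    using Links.indep_varsD_finite[OF indep_link_minima links, of "\<lambda>_. {..a}"] by simp
  moreover have "(\<Inter>k\<in>{..<M}. (\<lambda>\<omega>. min (\<omega> k) (\<omega> (M + k))) -` {..a} \<inter> ?\<Omega>)
      = {\<omega> \<in> ?\<Omega>. best_link_snr M \<omega> \<le> a}"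
    using links by (auto simp: best_link_snr_def)
  moreover have "(\<lambda>\<omega>. min (\<omega> k) (\<omega> (M + k))) -` {..a} \<inter> ?\<Omega> = {\<omega> \<in> ?\<Omega>. min (\<omega> k) (\<omega> (M + k)) \<le> a}"
    for k
    by auto
  ultimately have "Links.prob {\<omega> \<in> ?\<Omega>. best_link_snr M \<omega> \<le> a}
      = (\<Prod>k<M. Links.prob {\<omega> \<in> ?\<Omega>. min (\<omega> k) (\<omega> (M + k)) \<le> a})"
    by simp
  also have "\<dots> = (\<Prod>k<M. if 0 \<le> a then 1 - exp (- a / (g / 2)) else 0)"
    by (intro prod.cong) (simp_all add: prob_link_min_le)
  finally show ?thesis
    using M_pos by simp
qed

lemma distributed_best_link_snr:
  "distributed (PiM {..<2 * M} (\<lambda>_. snr)) lborel (best_link_snr M) (max_exp_density M (g / 2))"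
proof (rule distributedI_borel_atMost)
  show "best_link_snr M \<in> borel_measurable (PiM {..<2 * M} (\<lambda>_. snr))"
    unfolding best_link_snr_def by measurable
  fix a :: real
  show "(\<integral>\<^sup>+x. ennreal (max_exp_density M (g / 2) x * indicator {..a} x) \<partial>lborel)
          = ennreal (if 0 \<le> a then (1 - exp (- a / (g / 2))) ^ M else 0)"
    using g_pos M_pos by (intro nn_integral_max_exp_density_atMost) auto
  show "emeasure (PiM {..<2 * M} (\<lambda>_. snr)) {\<omega> \<in> space (PiM {..<2 * M} (\<lambda>_. snr)). best_link_snr M \<omega> \<le> a}
          = ennreal (if 0 \<le> a then (1 - exp (- a / (g / 2))) ^ M else 0)"
    by (simp add: Links.emeasure_eq_measure prob_best_link_snr_le)
qed (use g_pos in \<open>auto simp: max_exp_density_nonneg\<close>)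

lemma AE_link_snrs_nonneg: "AE \<omega> in PiM {..<2 * M} (\<lambda>_. snr). \<forall>i\<in>{..<2 * M}. 0 \<le> \<omega> i"
proof (rule eventually_ball_finite)
  have "AE x in snr. 0 \<le> x"
    by (subst AE_density) (auto simp: exponential_density_def)
  then show "\<forall>i\<in>{..<2 * M}. AE \<omega> in PiM {..<2 * M} (\<lambda>_. snr). 0 \<le> \<omega> i"
    by (auto intro: Links.AE_component)
qed simp

lemma integral_best_link_capacity:
  "(\<integral>\<omega>. Max ((\<lambda>k. min (log 2 (1 + \<omega> k)) (log 2 (1 + \<omega> (M + k)))) ` {..<M}) \<partial>PiM {..<2 * M} (\<lambda>_. snr))
     = (\<integral>x. max_exp_density M (g / 2) x * log 2 (1 + x) \<partial>lborel)"
proof -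
  have "(\<integral>x. max_exp_density M (g / 2) x * log 2 (1 + x) \<partial>lborel)
          = (\<integral>x. max_exp_density M (g / 2) x * log 2 (1 + max x 0) \<partial>lborel)"
    by (rule Bochner_Integration.integral_cong) (auto simp: max_exp_density_def)
  also have "\<dots> = (\<integral>\<omega>. log 2 (1 + max (best_link_snr M \<omega>) 0) \<partial>PiM {..<2 * M} (\<lambda>_. snr))"
  proof (rule distributed_integral[OF distributed_best_link_snr])
    show "(\<lambda>x. log 2 (1 + max x 0)) \<in> borel_measurable lborel"
      by measurable
  qed (use g_pos in \<open>simp add: max_exp_density_nonneg\<close>)
  also have "\<dots> = (\<integral>\<omega>. Max ((\<lambda>k. min (log 2 (1 + \<omega> k)) (log 2 (1 + \<omega> (M + k)))) ` {..<M})
                      \<partial>PiM {..<2 * M} (\<lambda>_. snr))"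
  proof (rule integral_cong_AE)
    show "(\<lambda>\<omega>. log 2 (1 + max (best_link_snr M \<omega>) 0)) \<in> borel_measurable (PiM {..<2 * M} (\<lambda>_. snr))"
      unfolding best_link_snr_def by measurable
    show "(\<lambda>\<omega>. Max ((\<lambda>k. min (log 2 (1 + \<omega> k)) (log 2 (1 + \<omega> (M + k)))) ` {..<M}))
            \<in> borel_measurable (PiM {..<2 * M} (\<lambda>_. snr))"
      by measurable
    show "AE \<omega> in PiM {..<2 * M} (\<lambda>_. snr). log 2 (1 + max (best_link_snr M \<omega>) 0)
            = Max ((\<lambda>k. min (log 2 (1 + \<omega> k)) (log 2 (1 + \<omega> (M + k)))) ` {..<M})"
      using AE_link_snrs_nonneg
      by eventually_elim (use M_pos in \<open>simp add: Max_min_log_eq_log_best_link_snr\<close>)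
  qed
  finally show ?thesis ..
qed

end

section \<open>Low-SNR asymptotics\<close>

lemma R_SD_eq_max_exp:
  assumes "1 \<le> M"
  shows "R_SD M g = (\<integral>x. max_exp_density (2 * M) g x * log 2 (1 + x) \<partial>lborel) / 2"
proof -
  have "(LBINT x:{0..}. log 2 (1 + x) * f_gamma g x * F_gamma g x ^ (2 * M - 1))
          = (\<integral>x. max_exp_density (2 * M) g x * log 2 (1 + x) / real (2 * M) \<partial>lborel)"
    unfolding set_lebesgue_integral_def using assms
    by (intro Bochner_Integration.integral_cong)
       (auto simp: max_exp_density_def indicator_def f_gamma_def F_gamma_def)
  then show ?thesis
    using assms by (simp add: R_SD_def)
qed

lemma R_conv_eq_max_exp:
  assumes "1 \<le> M" "0 < g"
  shows "R_conv M g = (\<integral>x. max_exp_density M (g / 2) x * log 2 (1 + x) \<partial>lborel) / 2"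
  using integral_best_link_capacity[OF assms] by (simp add: R_conv_def link_snrs_def)

lemma R_SD_div_tendsto:
  assumes "1 \<le> M"
  shows "((\<lambda>g. R_SD M g / g) \<longlongrightarrow> harm (2 * M) / (2 * ln 2)) (at_right 0)"
proof -
  have "((\<lambda>g. (\<integral>x. max_exp_density (2 * M) g x * log 2 (1 + x) \<partial>lborel) / g / 2)
          \<longlongrightarrow> harm (2 * M) / ln 2 / 2) (at_right 0)"
    using assms by (intro tendsto_divide tendsto_const max_exp_log_rate_tendsto) simp_all
  then show ?thesis
    using assms by (simp add: R_SD_eq_max_exp mult.commute)
qed

lemma R_conv_div_tendsto:
  assumes "1 \<le> M"
  shows "((\<lambda>g. R_conv M g / g) \<longlongrightarrow> harm M / (4 * ln 2)) (at_right 0)"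
proof -
  have half: "filterlim (\<lambda>g. g / 2) (at_right 0) (at_right (0 :: real))"
    by real_asymp
  have "((\<lambda>g. (\<integral>x. max_exp_density M (g / 2) x * log 2 (1 + x) \<partial>lborel) / (g / 2) / 4)
          \<longlongrightarrow> harm M / ln 2 / 4) (at_right 0)"
    by (intro tendsto_divide tendsto_const filterlim_compose[OF max_exp_log_rate_tendsto[OF assms] half]) simp
  moreover have "\<forall>\<^sub>F g in at_right 0.
      (\<integral>x. max_exp_density M (g / 2) x * log 2 (1 + x) \<partial>lborel) / (g / 2) / 4 = R_conv M g / g"
    using eventually_at_right_less[of "0 :: real"]
    by eventually_elim (use assms in \<open>simp add: R_conv_eq_max_exp\<close>)
  ultimately have "((\<lambda>g. R_conv M g / g) \<longlongrightarrow> harm M / ln 2 / 4) (at_right 0)"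
    by (rule Lim_transform_eventually)
  then show ?thesis
    by (simp add: mult.commute)
qed

lemma asymp_equiv_of_div_tendsto:
  fixes f :: "real \<Rightarrow> real"
  assumes "((\<lambda>x. f x / x) \<longlongrightarrow> L) F" "L \<noteq> 0"
  shows "f \<sim>[F] (\<lambda>x. x * L)"
proof (rule asymp_equivI')
  have "((\<lambda>x. f x / x / L) \<longlongrightarrow> L / L) F"
    by (intro tendsto_divide assms tendsto_const)
  then show "((\<lambda>x. f x / (x * L)) \<longlongrightarrow> 1) F"
    using assms(2) by simp
qed

lemma R_SD_div_R_conv_tendsto:
  assumes "1 \<le> M"
  shows "((\<lambda>g. R_SD M g / R_conv M g) \<longlongrightarrow> 2 * harm (2 * M) / harm M) (at_right 0)"
proof -
  have "harm M \<noteq> (0 :: real)"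
    using assms harm_pos[of M, where 'a = real] by linarith
  then have "((\<lambda>g. (R_SD M g / g) / (R_conv M g / g))
               \<longlongrightarrow> (harm (2 * M) / (2 * ln 2)) / (harm M / (4 * ln 2))) (at_right 0)"
    by (intro tendsto_divide[OF R_SD_div_tendsto[OF assms] R_conv_div_tendsto[OF assms]]) simp
  also have "(harm (2 * M) / (2 * ln 2)) / (harm M / (4 * ln 2)) = 2 * harm (2 * M) / (harm M :: real)"
    by (simp add: field_simps)
  finally show ?thesis
  proof (rule Lim_transform_eventually)
    show "\<forall>\<^sub>F g in at_right 0. (R_SD M g / g) / (R_conv M g / g) = R_SD M g / R_conv M g"
      using eventually_at_right_less[of "0 :: real"] by eventually_elim simp
  qed
qed

theorem mainTheorem5:
  shows "(\<forall>M::nat. M \<ge> 1 \<longrightarrow>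
            R_SD M \<sim>[at_right 0] (\<lambda>g. g / (2 * ln 2) * (\<Sum>k=1..2*M. 1 / real k)) \<and>
            R_conv M \<sim>[at_right 0] (\<lambda>g. g / (4 * ln 2) * (\<Sum>k=1..M. 1 / real k)) \<and>
            ((\<lambda>g. R_SD M g / R_conv M g) \<longlongrightarrow>
               2 * (\<Sum>k=1..2*M. 1 / real k) / (\<Sum>k=1..M. 1 / real k)) (at_right 0) \<and>
            2 * (\<Sum>k=1..2*M. 1 / real k) / (\<Sum>k=1..M. 1 / real k) \<in> {2..3})
       \<and> 2 * (\<Sum>k=1..2*1. 1 / real k) / (\<Sum>k=1..1. 1 / real k) = 3
       \<and> (\<lambda>M::nat. 2 * (\<Sum>k=1..2*M. 1 / real k) / (\<Sum>k=1..M. 1 / real k)) \<longlonglongrightarrow> 2"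
  unfolding sum_inverse_eq_harm
proof (intro conjI allI impI)
  fix M :: nat
  assume M: "M \<ge> 1"
  then have harm_pos: "0 < (harm M :: real)" "0 < (harm (2 * M) :: real)"
    by simp_all
  then have harm_nonzero: "harm M \<noteq> (0 :: real)" "harm (2 * M) \<noteq> (0 :: real)"
    by linarith+
  have "R_SD M \<sim>[at_right 0] (\<lambda>g. g * (harm (2 * M) / (2 * ln 2)))"
    using harm_nonzero by (intro asymp_equiv_of_div_tendsto R_SD_div_tendsto M) simp
  then show "R_SD M \<sim>[at_right 0] (\<lambda>g. g / (2 * ln 2) * harm (2 * M))"
    by (simp add: field_simps)
  have "R_conv M \<sim>[at_right 0] (\<lambda>g. g * (harm M / (4 * ln 2)))"
    using harm_nonzero by (intro asymp_equiv_of_div_tendsto R_conv_div_tendsto M) simp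
  then show "R_conv M \<sim>[at_right 0] (\<lambda>g. g / (4 * ln 2) * harm M)"
    by (simp add: field_simps)
  show "((\<lambda>g. R_SD M g / R_conv M g) \<longlongrightarrow> 2 * harm (2 * M) / harm M) (at_right 0)"
    using M by (rule R_SD_div_R_conv_tendsto)
  show "2 * harm (2 * M) / harm M \<in> {2..(3 :: real)}"
    using harm_pos harm_mono[of M "2 * M"] harm_double_le[of M] by (simp add: field_simps)
next
  show "2 * harm (2 * 1) / harm 1 = (3 :: real)"
    by (simp add: harm_def eval_nat_numeral)
qed (fact harm_double_ratio_tendsto)

end
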